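(* Let $3\leq d_A\leq d_B\leq d_C$ be integers and consider the tripartite system $\mathbb{C}^{d_A}\otimes\mathbb{C}^{d_B}\otimes\mathbb{C}^{d_C}$. Then the set of (unnormalized) product states $\mathcal{U}=\bigcup_{i=1}^3(\mathcal{A}_i\cup\mathcal{B}_i)\cup\mathcal{F}\cup\{|S\rangle\}$ defined in the context is an unextendible product basis of size $d_Ad_Bd_C-8$.
   Context: $\{|0\rangle,\dots,|d_X-1\rangle\}$ is the computational basis of party $X\in\{A,B,C\}$, $\mathbb{Z}_n=\{0,1,\dots,n-1\}$, and $w_n=e^{2\pi\sqrt{-1}/n}$. For $X\in\{A,B,C\}$ define $|\eta_s\rangle_X=\sum_{t=0}^{d_X-2}w_{d_X-1}^{st}|t\rangle_X$ and $|\xi_s\rangle_X=\sum_{t=0}^{d_X-2}w_{d_X-1}^{st}|t+1\rangle_X$ for $s\in\mathbb{Z}_{d_X-1}$, and $|\beta_s\rangle_X=\sum_{t=0}^{d_X-3}w_{d_X-2}^{st}|t+1\rangle_X$ for $s\in\mathbb{Z}_{d_X-2}$. Define $\mathcal{A}_1=\{|\xi_i\rangle_A|0\rangle_B|\eta_k\rangle_C:(i,k)\in\mathbb{Z}_{d_A-1}\times\mathbb{Z}_{d_C-1}\setminus\{(0,0)\}\}$, $\mathcal{A}_2=\{|\xi_i\rangle_A|\eta_j\rangle_B|d_C-1\rangle_C:(i,j)\in\mathbb{Z}_{d_A-1}\times\mathbb{Z}_{d_B-1}\setminus\{(0,0)\}\}$, $\mathcal{A}_3=\{|d_A-1\rangle_A|\xi_j\rangle_B|\eta_k\rangle_C:(j,k)\in\mathbb{Z}_{d_B-1}\times\mathbb{Z}_{d_C-1}\setminus\{(0,0)\}\}$,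 $\mathcal{B}_1=\{|\eta_i\rangle_A|d_B-1\rangle_B|\xi_k\rangle_C:(i,k)\in\mathbb{Z}_{d_A-1}\times\mathbb{Z}_{d_C-1}\setminus\{(0,0)\}\}$, $\mathcal{B}_2=\{|\eta_i\rangle_A|\xi_j\rangle_B|0\rangle_C:(i,j)\in\mathbb{Z}_{d_A-1}\times\mathbb{Z}_{d_B-1}\setminus\{(0,0)\}\}$, $\mathcal{B}_3=\{|0\rangle_A|\eta_j\rangle_B|\xi_k\rangle_C:(j,k)\in\mathbb{Z}_{d_B-1}\times\mathbb{Z}_{d_C-1}\setminus\{(0,0)\}\}$, $\mathcal{F}=\{|\beta_i\rangle_A|\beta_j\rangle_B|\beta_k\rangle_C:(i,j,k)\in\mathbb{Z}_{d_A-2}\times\mathbb{Z}_{d_B-2}\times\mathbb{Z}_{d_C-2}\setminus\{(0,0,0)\}\}$, and the "stopper" state $|S\rangle=(\sum_{i=0}^{d_A-1}|i\rangle)_A(\sum_{j=0}^{d_B-1}|j\rangle)_B(\sum_{k=0}^{d_C-1}|k\rangle)_C$. An unextendible product basis (UPB) of a multipartite system is a set of mutually orthogonal product states, not spanning the whole space, whose orthogonal complement contains no (fully) product state. *)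

theory Defs
  imports Complex_Main
begin

text \<open>Vectors of \<open>C^d\<close> are functions \<open>nat \<Rightarrow> complex\<close> vanishing outside \<open>{..<d}\<close>;
  vectors of \<open>C^dA \<otimes> C^dB \<otimes> C^dC\<close> are functions \<open>nat \<Rightarrow> nat \<Rightarrow> nat \<Rightarrow> complex\<close>
  vanishing outside \<open>{..<dA} \<times> {..<dB} \<times> {..<dC}\<close> (coefficients in the computational basis).\<close>

definition cvec :: "nat \<Rightarrow> (nat \<Rightarrow> complex) set" where
  "cvec d = {v. \<forall>i. d \<le> i \<longrightarrow> v i = 0}"

definition tspace :: "nat \<Rightarrow> nat \<Rightarrow> nat \<Rightarrow> (nat \<Rightarrow> nat \<Rightarrow> nat \<Rightarrow> complex) set" where
  "tspace dA dB dC = {v. \<forall>a b c. (dA \<le> a \<or> dB \<le> b \<or> dC \<le> c) \<longrightarrow> v a b c = 0}"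

definition prod3 :: "(nat \<Rightarrow> complex) \<Rightarrow> (nat \<Rightarrow> complex) \<Rightarrow> (nat \<Rightarrow> complex) \<Rightarrow> nat \<Rightarrow> nat \<Rightarrow> nat \<Rightarrow> complex" where
  "prod3 x y z = (\<lambda>a b c. x a * y b * z c)"

definition tinner :: "nat \<Rightarrow> nat \<Rightarrow> nat \<Rightarrow> (nat \<Rightarrow> nat \<Rightarrow> nat \<Rightarrow> complex) \<Rightarrow> (nat \<Rightarrow> nat \<Rightarrow> nat \<Rightarrow> complex) \<Rightarrow> complex" where
  "tinner dA dB dC u v = (\<Sum>a<dA. \<Sum>b<dB. \<Sum>c<dC. cnj (u a b c) * v a b c)"

definition product_state :: "nat \<Rightarrow> nat \<Rightarrow> nat \<Rightarrow> (nat \<Rightarrow> nat \<Rightarrow> nat \<Rightarrow> complex) \<Rightarrow> bool" where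
  "product_state dA dB dC v \<longleftrightarrow> v \<noteq> (\<lambda>a b c. 0) \<and>
     (\<exists>x y z. x \<in> cvec dA \<and> y \<in> cvec dB \<and> z \<in> cvec dC \<and> v = prod3 x y z)"

definition tspan :: "(nat \<Rightarrow> nat \<Rightarrow> nat \<Rightarrow> complex) set \<Rightarrow> (nat \<Rightarrow> nat \<Rightarrow> nat \<Rightarrow> complex) set" where
  "tspan U = {v. \<exists>f. v = (\<lambda>a b c. \<Sum>u\<in>U. f u * u a b c)}"

definition is_UPB :: "nat \<Rightarrow> nat \<Rightarrow> nat \<Rightarrow> (nat \<Rightarrow> nat \<Rightarrow> nat \<Rightarrow> complex) set \<Rightarrow> bool" where
  "is_UPB dA dB dC U \<longleftrightarrow>
     finite U \<and>
     (\<forall>u\<in>U. product_state dA dB dC u) \<and>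
     (\<forall>u\<in>U. \<forall>v\<in>U. u \<noteq> v \<longrightarrow> tinner dA dB dC u v = 0) \<and>
     \<not> (tspace dA dB dC \<subseteq> tspan U) \<and>
     (\<forall>v. product_state dA dB dC v \<longrightarrow> \<not> (\<forall>u\<in>U. tinner dA dB dC u v = 0))"

definition root_unity :: "nat \<Rightarrow> complex" where
  "root_unity n = cis (2 * pi / real n)"

definition ket :: "nat \<Rightarrow> nat \<Rightarrow> complex" where
  "ket t = (\<lambda>i. if i = t then 1 else 0)"

definition eta :: "nat \<Rightarrow> nat \<Rightarrow> nat \<Rightarrow> complex" where
  "eta d s = (\<lambda>i. \<Sum>t\<in>{0..d-2}. root_unity (d-1) ^ (s*t) * ket t i)"

definition xi :: "nat \<Rightarrow> nat \<Rightarrow> nat \<Rightarrow> complex" where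
  "xi d s = (\<lambda>i. \<Sum>t\<in>{0..d-2}. root_unity (d-1) ^ (s*t) * ket (t+1) i)"

definition beta :: "nat \<Rightarrow> nat \<Rightarrow> nat \<Rightarrow> complex" where
  "beta d s = (\<lambda>i. \<Sum>t\<in>{0..d-3}. root_unity (d-2) ^ (s*t) * ket (t+1) i)"

definition allones :: "nat \<Rightarrow> nat \<Rightarrow> complex" where
  "allones d = (\<lambda>i. \<Sum>t<d. ket t i)"

definition UPB_set :: "nat \<Rightarrow> nat \<Rightarrow> nat \<Rightarrow> (nat \<Rightarrow> nat \<Rightarrow> nat \<Rightarrow> complex) set" where
  "UPB_set dA dB dC =
     {prod3 (xi dA i) (ket 0) (eta dC k) | i k. i < dA - 1 \<and> k < dC - 1 \<and> (i, k) \<noteq> (0, 0)} \<union>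
     {prod3 (xi dA i) (eta dB j) (ket (dC - 1)) | i j. i < dA - 1 \<and> j < dB - 1 \<and> (i, j) \<noteq> (0, 0)} \<union>
     {prod3 (ket (dA - 1)) (xi dB j) (eta dC k) | j k. j < dB - 1 \<and> k < dC - 1 \<and> (j, k) \<noteq> (0, 0)} \<union>
     {prod3 (eta dA i) (ket (dB - 1)) (xi dC k) | i k. i < dA - 1 \<and> k < dC - 1 \<and> (i, k) \<noteq> (0, 0)} \<union>
     {prod3 (eta dA i) (xi dB j) (ket 0) | i j. i < dA - 1 \<and> j < dB - 1 \<and> (i, j) \<noteq> (0, 0)} \<union>
     {prod3 (ket 0) (eta dB j) (xi dC k) | j k. j < dB - 1 \<and> k < dC - 1 \<and> (j, k) \<noteq> (0, 0)} \<union>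
     {prod3 (beta dA i) (beta dB j) (beta dC k) | i j k.
        i < dA - 2 \<and> j < dB - 2 \<and> k < dC - 2 \<and> (i, j, k) \<noteq> (0, 0, 0)} \<union>
     {prod3 (allones dA) (allones dB) (allones dC)}"

end

theory Submission
  imports Defs "HOL-Analysis.Analysis"
begin

(*
  Distinct members are orthogonal factor by factor: up to a shift of the index, xi_s, eta_s and
  beta_s are the discrete Fourier modes on the blocks {1..d-1}, {0..d-2} and {1..d-2} of the
  computational basis, so distinct modes are orthogonal and the nonconstant ones are orthogonal to
  the all-ones vector.  Being pairwise orthogonal and nonzero, the members are counted by their
  labels.  Every member takes the same value at the corners (0,0,0) and (dA-1,dB-1,dC-1), hence so
  does every vector in their span, which therefore misses |000>.

  Unextendibility: let x (x) y (x) z be a product state orthogonal to all members.  For the family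
  xi_i (x) |0> (x) eta_k, (i,k) <> (0,0), orthogonality says that y_0 = 0 or that the Fourier
  transforms of the upper part of x and of the lower part of z have a product vanishing off the
  origin; the latter forces one of these parts to vanish or both to be constant.  The other families
  give the same kind of constraint, and F gives it for the middle blocks.  The constraints are
  invariant under a cyclic shift of the parties.  They force every factor to be constant on its
  middle block, and then its profile (x_0, x_1, x_(d-1)) to be a multiple of (1,0,0), (0,1,0),
  (0,0,1), (1,1,0), (0,1,1) or (1,1,1).  So no factor has coordinate sum 0, which contradicts
  orthogonality to the stopper.
*)

section \<open>Roots of unity and the discrete Fourier transform\<close>

lemma root_unity_pow_eq_1_iff:
  assumes "1 \<le> n" shows "root_unity n ^ k = 1 \<longleftrightarrow> n dvd k"
proof -
  have "root_unity n ^ k = cis (real k * (2 * pi / real n))"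
    unfolding root_unity_def by (rule Complex.DeMoivre)
  also have "\<dots> = exp (2 * of_real pi * \<i> * of_nat k / of_nat n)"
    unfolding cis_conv_exp by (simp add: mult_ac)
  finally show ?thesis using complex_root_unity_eq_1[OF assms, of k] by simp
qed

lemma norm_root_unity [simp]: "norm (root_unity n) = 1"
  by (simp add: root_unity_def)

lemma cnj_root_unity_pow:
  assumes "1 \<le> n" "i \<le> n" shows "cnj (root_unity n ^ i) = root_unity n ^ (n - i)"
proof -
  have "root_unity n ^ i * root_unity n ^ (n - i) = 1"
    using assms by (simp add: power_add[symmetric] root_unity_pow_eq_1_iff)
  moreover have "root_unity n ^ i * cnj (root_unity n ^ i) = 1"
    using complex_norm_square[of "root_unity n ^ i"] by (simp add: norm_power)
  ultimately show ?thesis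
    by (metis mult.left_commute mult_1_right mult.commute)
qed

lemma sum_root_unity_pow:
  assumes "1 \<le> n" "\<not> n dvd k" shows "(\<Sum>t<n. root_unity n ^ (k * t)) = 0"
proof -
  have "root_unity n ^ k \<noteq> 1" "(root_unity n ^ k) ^ n = 1"
    using assms by (simp_all add: root_unity_pow_eq_1_iff flip: power_mult)
  then show ?thesis by (simp add: power_mult geometric_sum)
qed

definition dft :: "nat \<Rightarrow> (nat \<Rightarrow> complex) \<Rightarrow> nat \<Rightarrow> complex" where
  "dft n f i = (\<Sum>t<n. cnj (root_unity n ^ (i * t)) * f t)"

lemma dft_cong: "(\<And>t. t < n \<Longrightarrow> f t = g t) \<Longrightarrow> dft n f i = dft n g i"
  unfolding dft_def by (intro sum.cong) auto

lemma cnj_root_unity_pow_mult: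
  assumes "1 \<le> n" "i \<le> n"
  shows "cnj (root_unity n ^ (i * t)) * root_unity n ^ (j * t) = root_unity n ^ ((n - i + j) * t)"
proof -
  have "cnj (root_unity n ^ (i * t)) = root_unity n ^ ((n - i) * t)"
    using assms by (metis cnj_root_unity_pow complex_cnj_power power_mult)
  then show ?thesis by (simp add: add_mult_distrib power_add)
qed

lemma not_dvd_diff_add:
  fixes n i j :: nat
  assumes "i < n" "j < n" "i \<noteq> j" shows "\<not> n dvd (n - i + j)"
proof (cases "j < i")
  case True
  then show ?thesis using assms by (intro nat_dvd_not_less) auto
next
  case False
  then have "n - i + j = n + (j - i)" "0 < j - i" "j - i < n" using assms by auto
  then show ?thesis by (metis dvd_add_triv_left_iff nat_dvd_not_less)
qed

lemma dft_root_unity_pow: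
  assumes "1 \<le> n" "i < n" "j < n"
  shows "dft n (\<lambda>t. root_unity n ^ (j * t)) i = (if i = j then of_nat n else 0)"
proof -
  have dft: "dft n (\<lambda>t. root_unity n ^ (j * t)) i = (\<Sum>t<n. root_unity n ^ ((n - i + j) * t))"
    by (simp only: dft_def cnj_root_unity_pow_mult[OF assms(1) less_imp_le[OF assms(2)]])
  show ?thesis
  proof (cases "i = j")
    case True
    have "root_unity n ^ n = 1" using assms by (simp add: root_unity_pow_eq_1_iff)
    then show ?thesis using dft True assms by (simp add: power_mult)
  next
    case False
    then show ?thesis using dft not_dvd_diff_add[OF assms(2,3)] assms by (simp add: sum_root_unity_pow)
  qed
qed

lemma dft_1: "1 \<le> n \<Longrightarrow> 0 < i \<Longrightarrow> i < n \<Longrightarrow> dft n (\<lambda>_. 1) i = 0"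
  using dft_root_unity_pow[of n i 0] by simp

lemma dft_inversion:
  assumes "1 \<le> n" "s < n"
  shows "(\<Sum>i<n. root_unity n ^ (s * i) * dft n f i) = of_nat n * f s"
proof -
  have "(\<Sum>i<n. root_unity n ^ (s * i) * dft n f i)
      = (\<Sum>t<n. f t * (\<Sum>i<n. cnj (root_unity n ^ (t * i)) * root_unity n ^ (s * i)))"
    unfolding dft_def sum_distrib_left by (subst sum.swap) (simp add: mult_ac)
  also have "\<dots> = (\<Sum>t<n. f t * (if t = s then of_nat n else 0))"
    using dft_root_unity_pow[OF assms(1) _ assms(2)] by (intro sum.cong) (auto simp: dft_def)
  also have "\<dots> = of_nat n * f s"
    using assms(2) by (simp add: if_distrib mult.commute cong: if_cong)
  finally show ?thesis .
qed

lemma dft_vanishing_off_0: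
  assumes "1 \<le> n" "\<forall>i\<in>{1..<n}. dft n f i = 0" "s < n"
  shows "of_nat n * f s = dft n f 0"
proof -
  have "(\<Sum>i<n. root_unity n ^ (s * i) * dft n f i) = (\<Sum>i<n. if i = 0 then dft n f 0 else 0)"
    using assms(2) by (intro sum.cong) auto
  then show ?thesis using dft_inversion[OF assms(1,3)] assms(1) by simp
qed

definition const_on :: "nat set \<Rightarrow> (nat \<Rightarrow> complex) \<Rightarrow> bool" where
  "const_on I x \<longleftrightarrow> (\<exists>c. \<forall>t\<in>I. x t = c)"

lemma dft_eq_0_imp_eq_0:
  assumes "1 \<le> n" "\<forall>i<n. dft n f i = 0" shows "\<forall>t\<in>{..<n}. f t = 0"
proof
  fix t assume "t \<in> {..<n}"
  then have "of_nat n * f t = 0" using dft_vanishing_off_0[of n f t] assms by simp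
  then show "f t = 0" using assms(1) by simp
qed

lemma dft_vanishing_off_0_imp_const:
  assumes "1 \<le> n" "\<forall>i\<in>{1..<n}. dft n f i = 0" shows "const_on {..<n} f"
  unfolding const_on_def
proof (intro exI ballI)
  fix t assume "t \<in> {..<n}"
  then have "of_nat n * f t = of_nat n * f 0"
    using dft_vanishing_off_0[OF assms] assms(1) by simp
  then show "f t = f 0" using assms(1) by simp
qed

lemma dft_products_vanishing_off_0:
  assumes n: "1 \<le> n" and m: "1 \<le> m"
    and vanish: "\<forall>i<n. \<forall>k<m. (i, k) \<noteq> (0, 0) \<longrightarrow> dft n p i * dft m q k = 0"
  shows "(\<forall>t\<in>{..<n}. p t = 0) \<or> (\<forall>t\<in>{..<m}. q t = 0) \<or> (const_on {..<n} p \<and> const_on {..<m} q)"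
proof (cases "(\<forall>i<n. dft n p i = 0) \<or> (\<forall>k<m. dft m q k = 0)")
  case True
  then show ?thesis using dft_eq_0_imp_eq_0 n m by blast
next
  case False
  then obtain i0 k0 where "i0 < n" "dft n p i0 \<noteq> 0" "k0 < m" "dft m q k0 \<noteq> 0" by blast
  then have "\<forall>i\<in>{1..<n}. dft n p i = 0" "\<forall>k\<in>{1..<m}. dft m q k = 0"
    using vanish by fastforce+
  then show ?thesis using dft_vanishing_off_0_imp_const n m by blast
qed

lemma dft_products_vanishing_off_0_3:
  assumes n: "1 \<le> n" and m: "1 \<le> m" and l: "1 \<le> l"
    and vanish: "\<forall>i<n. \<forall>j<m. \<forall>k<l. (i, j, k) \<noteq> (0, 0, 0) \<longrightarrow> dft n p i * dft m q j * dft l r k = 0"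
  shows "(\<forall>t\<in>{..<n}. p t = 0) \<or> (\<forall>t\<in>{..<m}. q t = 0) \<or> (\<forall>t\<in>{..<l}. r t = 0) \<or>
    (const_on {..<n} p \<and> const_on {..<m} q \<and> const_on {..<l} r)"
proof (cases "(\<forall>i<n. dft n p i = 0) \<or> (\<forall>j<m. dft m q j = 0) \<or> (\<forall>k<l. dft l r k = 0)")
  case True
  then show ?thesis using dft_eq_0_imp_eq_0 n m l by blast
next
  case False
  then obtain i0 j0 k0 where "i0 < n" "dft n p i0 \<noteq> 0" "j0 < m" "dft m q j0 \<noteq> 0"
    "k0 < l" "dft l r k0 \<noteq> 0" by blast
  then have "\<forall>i\<in>{1..<n}. dft n p i = 0" "\<forall>j\<in>{1..<m}. dft m q j = 0" "\<forall>k\<in>{1..<l}. dft l r k = 0"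
    using vanish by fastforce+
  then show ?thesis using dft_vanishing_off_0_imp_const n m l by blast
qed

section \<open>Inner products of the local vectors\<close>

definition cinner :: "nat \<Rightarrow> (nat \<Rightarrow> complex) \<Rightarrow> (nat \<Rightarrow> complex) \<Rightarrow> complex" where
  "cinner d u v = (\<Sum>t<d. cnj (u t) * v t)"

lemma cnj_ket [simp]: "cnj (ket j t) = ket j t"
  by (simp add: ket_def)

lemma ket_apply: "ket j t = (if t = j then 1 else 0)"
  by (simp add: ket_def)

lemma ket_mult: "ket j t * v = (if t = j then v else 0)"
  by (simp add: ket_def)

lemma cinner_commute: "cinner d u v = cnj (cinner d v u)"
  by (simp add: cinner_def mult.commute)

lemma tinner_prod3:
  "tinner dA dB dC (prod3 u1 u2 u3) (prod3 x y z) = cinner dA u1 x * cinner dB u2 y * cinner dC u3 z"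
proof -
  have "tinner dA dB dC (prod3 u1 u2 u3) (prod3 x y z) =
      (\<Sum>a<dA. \<Sum>b<dB. \<Sum>c<dC. (cnj (u1 a) * x a) * ((cnj (u2 b) * y b) * (cnj (u3 c) * z c)))"
    by (simp add: tinner_def prod3_def mult_ac)
  also have "\<dots> = (\<Sum>a<dA. cnj (u1 a) * x a * (\<Sum>b<dB. cnj (u2 b) * y b * (\<Sum>c<dC. cnj (u3 c) * z c)))"
    by (simp only: sum_distrib_left)
  also have "\<dots> = cinner dA u1 x * (cinner dB u2 y * cinner dC u3 z)"
    by (simp only: cinner_def sum_distrib_right)
  finally show ?thesis by (simp only: mult.assoc)
qed

lemma cinner_sum_kets:
  assumes "finite T" "\<forall>t\<in>T. g t < d"
  shows "cinner d (\<lambda>s. \<Sum>t\<in>T. c t * ket (g t) s) x = (\<Sum>t\<in>T. cnj (c t) * x (g t))"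
proof -
  have "cinner d (\<lambda>s. \<Sum>t\<in>T. c t * ket (g t) s) x = (\<Sum>t\<in>T. cnj (c t) * (\<Sum>s<d. ket (g t) s * x s))"
    unfolding cinner_def cnj_sum sum_distrib_left sum_distrib_right
    by (subst sum.swap) (simp add: mult_ac)
  also have "\<dots> = (\<Sum>t\<in>T. cnj (c t) * x (g t))"
    using assms(2) by (intro sum.cong refl) (simp add: ket_mult)
  finally show ?thesis .
qed

lemma cinner_ket: "j < d \<Longrightarrow> cinner d (ket j) x = x j"
  by (simp add: cinner_def ket_mult)

lemma cinner_xi: "2 \<le> d \<Longrightarrow> cinner d (xi d i) x = dft (d - 1) (\<lambda>t. x (Suc t)) i"
  unfolding xi_def dft_def
  by (subst cinner_sum_kets) (auto intro!: sum.cong simp: atLeast0AtMost)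

lemma cinner_eta: "2 \<le> d \<Longrightarrow> cinner d (eta d i) x = dft (d - 1) x i"
  unfolding eta_def dft_def
  by (subst cinner_sum_kets) (auto intro!: sum.cong simp: atLeast0AtMost)

lemma cinner_beta: "3 \<le> d \<Longrightarrow> cinner d (beta d i) x = dft (d - 2) (\<lambda>t. x (Suc t)) i"
  unfolding beta_def dft_def
  by (subst cinner_sum_kets) (auto intro!: sum.cong simp: atLeast0AtMost)

lemma cinner_allones: "cinner d (allones d) x = (\<Sum>t<d. x t)"
  unfolding allones_def
  using cinner_sum_kets[of "{..<d}" id d "\<lambda>_. 1" x] by simp

lemma sum_shifted_kets_apply:
  "(\<Sum>s\<in>{0..m}. g s * ket (s + k) t) = (if k \<le> t \<and> t \<le> m + k then g (t - k) else 0)"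
proof -
  have "(\<Sum>s\<in>{0..m}. g s * ket (s + k) t) = (\<Sum>s\<in>{0..m}. if s = t - k \<and> k \<le> t then g s else 0)"
    by (intro sum.cong) (auto simp: ket_def)
  then show ?thesis by (auto simp: sum.delta')
qed

lemma xi_apply:
  "2 \<le> d \<Longrightarrow> xi d i t = (if 1 \<le> t \<and> t < d then root_unity (d - 1) ^ (i * (t - 1)) else 0)"
  using sum_shifted_kets_apply[where g="\<lambda>s. root_unity (d - 1) ^ (i * s)" and m="d - 2" and k=1]
  by (auto simp: xi_def)

lemma eta_apply:
  "2 \<le> d \<Longrightarrow> eta d i t = (if t < d - 1 then root_unity (d - 1) ^ (i * t) else 0)"
  using sum_shifted_kets_apply[where g="\<lambda>s. root_unity (d - 1) ^ (i * s)" and m="d - 2" and k=0]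
  by (auto simp: eta_def)

lemma beta_apply:
  "3 \<le> d \<Longrightarrow> beta d i t = (if 1 \<le> t \<and> t < d - 1 then root_unity (d - 2) ^ (i * (t - 1)) else 0)"
  using sum_shifted_kets_apply[where g="\<lambda>s. root_unity (d - 2) ^ (i * s)" and m="d - 3" and k=1]
  by (auto simp: beta_def)

lemma allones_apply: "allones d t = (if t < d then 1 else 0)"
  by (simp add: allones_def ket_def)

lemma cinner_xi_xi:
  assumes "2 \<le> d" "i < d - 1" "j < d - 1"
  shows "cinner d (xi d i) (xi d j) = (if i = j then of_nat (d - 1) else 0)"
proof -
  have "cinner d (xi d i) (xi d j) = dft (d - 1) (\<lambda>t. root_unity (d - 1) ^ (j * t)) i"
    unfolding cinner_xi[OF assms(1)] using assms(1) by (intro dft_cong) (auto simp: xi_apply)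
  then show ?thesis using assms by (simp add: dft_root_unity_pow)
qed

lemma cinner_eta_eta:
  assumes "2 \<le> d" "i < d - 1" "j < d - 1"
  shows "cinner d (eta d i) (eta d j) = (if i = j then of_nat (d - 1) else 0)"
proof -
  have "cinner d (eta d i) (eta d j) = dft (d - 1) (\<lambda>t. root_unity (d - 1) ^ (j * t)) i"
    unfolding cinner_eta[OF assms(1)] using assms(1) by (intro dft_cong) (auto simp: eta_apply)
  then show ?thesis using assms by (simp add: dft_root_unity_pow)
qed

lemma cinner_beta_beta:
  assumes "3 \<le> d" "i < d - 2" "j < d - 2"
  shows "cinner d (beta d i) (beta d j) = (if i = j then of_nat (d - 2) else 0)"
proof -
  have "cinner d (beta d i) (beta d j) = dft (d - 2) (\<lambda>t. root_unity (d - 2) ^ (j * t)) i"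
    unfolding cinner_beta[OF assms(1)] using assms(1) by (intro dft_cong) (auto simp: beta_apply)
  then show ?thesis using assms by (simp add: dft_root_unity_pow)
qed

lemma cinner_xi_allones:
  assumes "2 \<le> d" "0 < i" "i < d - 1" shows "cinner d (xi d i) (allones d) = 0"
proof -
  have "cinner d (xi d i) (allones d) = dft (d - 1) (\<lambda>_. 1) i"
    unfolding cinner_xi[OF assms(1)] by (intro dft_cong) (auto simp: allones_apply)
  then show ?thesis using assms by (simp add: dft_1)
qed

lemma cinner_eta_allones:
  assumes "2 \<le> d" "0 < i" "i < d - 1" shows "cinner d (eta d i) (allones d) = 0"
proof -
  have "cinner d (eta d i) (allones d) = dft (d - 1) (\<lambda>_. 1) i"
    unfolding cinner_eta[OF assms(1)] by (intro dft_cong) (auto simp: allones_apply)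
  then show ?thesis using assms by (simp add: dft_1)
qed

lemma cinner_beta_allones:
  assumes "3 \<le> d" "0 < i" "i < d - 2" shows "cinner d (beta d i) (allones d) = 0"
proof -
  have "cinner d (beta d i) (allones d) = dft (d - 2) (\<lambda>_. 1) i"
    unfolding cinner_beta[OF assms(1)] by (intro dft_cong) (auto simp: allones_apply)
  then show ?thesis using assms by (simp add: dft_1)
qed

section \<open>Labelling the members\<close>

(* A member of UPB_set is named by the triple of labels of its tensor factors, which turns the
  orthogonality of distinct members into a finite case check on the factors. *)
datatype label = Ket0 | KetLast | Xi nat | Eta nat | Beta nat | Ones

fun label_vec :: "nat \<Rightarrow> label \<Rightarrow> nat \<Rightarrow> complex" where
  "label_vec d Ket0 = ket 0"
| "label_vec d KetLast = ket (d - 1)"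
| "label_vec d (Xi i) = xi d i"
| "label_vec d (Eta i) = eta d i"
| "label_vec d (Beta i) = beta d i"
| "label_vec d Ones = allones d"

fun label_in_range :: "nat \<Rightarrow> label \<Rightarrow> bool" where
  "label_in_range d (Xi i) = (i < d - 1)"
| "label_in_range d (Eta i) = (i < d - 1)"
| "label_in_range d (Beta i) = (i < d - 2)"
| "label_in_range d _ = True"

fun label_orth :: "label \<Rightarrow> label \<Rightarrow> bool" where
  "label_orth Ket0 KetLast = True"
| "label_orth Ket0 (Xi _) = True"
| "label_orth Ket0 (Beta _) = True"
| "label_orth KetLast (Eta _) = True"
| "label_orth KetLast (Beta _) = True"
| "label_orth (Xi i) (Xi j) = (i \<noteq> j)"
| "label_orth (Eta i) (Eta j) = (i \<noteq> j)"
| "label_orth (Beta i) (Beta j) = (i \<noteq> j)"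
| "label_orth (Xi i) Ones = (i \<noteq> 0)"
| "label_orth (Eta i) Ones = (i \<noteq> 0)"
| "label_orth (Beta i) Ones = (i \<noteq> 0)"
| "label_orth _ _ = False"

lemma cinner_label_orth:
  assumes "3 \<le> d" "label_in_range d a" "label_in_range d b" "label_orth a b"
  shows "cinner d (label_vec d a) (label_vec d b) = 0"
  using assms
  by (cases a; cases b)
    (simp_all add: cinner_ket ket_apply xi_apply eta_apply beta_apply cinner_xi_xi cinner_eta_eta
      cinner_beta_beta cinner_xi_allones cinner_eta_allones cinner_beta_allones)

lemma label_vec_cvec: "3 \<le> d \<Longrightarrow> label_vec d a \<in> cvec d"
  by (cases a) (auto simp: cvec_def ket_apply xi_apply eta_apply beta_apply allones_apply)


definition index_pairs :: "nat \<Rightarrow> nat \<Rightarrow> (nat \<times> nat) set" where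
  "index_pairs n m = {..<n} \<times> {..<m} - {(0, 0)}"

definition index_triples :: "nat \<Rightarrow> nat \<Rightarrow> nat \<Rightarrow> (nat \<times> nat \<times> nat) set" where
  "index_triples n m l = {..<n} \<times> {..<m} \<times> {..<l} - {(0, 0, 0)}"

definition labels :: "nat \<Rightarrow> nat \<Rightarrow> nat \<Rightarrow> (label \<times> label \<times> label) set" where
  "labels dA dB dC =
     (\<lambda>(i, k). (Xi i, Ket0, Eta k)) ` index_pairs (dA - 1) (dC - 1) \<union>
     (\<lambda>(i, j). (Xi i, Eta j, KetLast)) ` index_pairs (dA - 1) (dB - 1) \<union>
     (\<lambda>(j, k). (KetLast, Xi j, Eta k)) ` index_pairs (dB - 1) (dC - 1) \<union>
     (\<lambda>(i, k). (Eta i, KetLast, Xi k)) ` index_pairs (dA - 1) (dC - 1) \<union>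
     (\<lambda>(i, j). (Eta i, Xi j, Ket0)) ` index_pairs (dA - 1) (dB - 1) \<union>
     (\<lambda>(j, k). (Ket0, Eta j, Xi k)) ` index_pairs (dB - 1) (dC - 1) \<union>
     (\<lambda>(i, j, k). (Beta i, Beta j, Beta k)) ` index_triples (dA - 2) (dB - 2) (dC - 2) \<union>
     {(Ones, Ones, Ones)}"

definition label_state :: "nat \<Rightarrow> nat \<Rightarrow> nat \<Rightarrow> label \<times> label \<times> label \<Rightarrow> nat \<Rightarrow> nat \<Rightarrow> nat \<Rightarrow> complex" where
  "label_state dA dB dC = (\<lambda>(a, b, c). prod3 (label_vec dA a) (label_vec dB b) (label_vec dC c))"

lemma image_index_pairs:
  "(\<lambda>(i, k). g i k) ` index_pairs n m = {g i k | i k. i < n \<and> k < m \<and> (i, k) \<noteq> (0, 0)}"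
  by (auto simp: index_pairs_def)

lemma image_index_triples:
  "(\<lambda>(i, j, k). g i j k) ` index_triples n m l =
    {g i j k | i j k. i < n \<and> j < m \<and> k < l \<and> (i, j, k) \<noteq> (0, 0, 0)}"
  unfolding index_triples_def by (auto simp: image_iff) force+

lemma UPB_set_eq_image_labels: "UPB_set dA dB dC = label_state dA dB dC ` labels dA dB dC"
  unfolding labels_def image_Un image_image unfolding prod.case_distrib
  by (simp add: label_state_def image_index_pairs image_index_triples UPB_set_def)

lemma labels_cases:
  assumes "D \<in> labels dA dB dC"
  obtains (A1) i k where "D = (Xi i, Ket0, Eta k)" "i < dA - 1" "k < dC - 1" "(i, k) \<noteq> (0, 0)"
  | (A2) i j where "D = (Xi i, Eta j, KetLast)" "i < dA - 1" "j < dB - 1" "(i, j) \<noteq> (0, 0)"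
  | (A3) j k where "D = (KetLast, Xi j, Eta k)" "j < dB - 1" "k < dC - 1" "(j, k) \<noteq> (0, 0)"
  | (B1) i k where "D = (Eta i, KetLast, Xi k)" "i < dA - 1" "k < dC - 1" "(i, k) \<noteq> (0, 0)"
  | (B2) i j where "D = (Eta i, Xi j, Ket0)" "i < dA - 1" "j < dB - 1" "(i, j) \<noteq> (0, 0)"
  | (B3) j k where "D = (Ket0, Eta j, Xi k)" "j < dB - 1" "k < dC - 1" "(j, k) \<noteq> (0, 0)"
  | (F) i j k where "D = (Beta i, Beta j, Beta k)" "i < dA - 2" "j < dB - 2" "k < dC - 2"
      "(i, j, k) \<noteq> (0, 0, 0)"
  | (S) "D = (Ones, Ones, Ones)"
  using assms unfolding labels_def image_index_pairs image_index_triples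
  by (elim UnE CollectE exE conjE insertE emptyE) (rule that; assumption)+

lemma labels_in_range:
  "(a, b, c) \<in> labels dA dB dC \<Longrightarrow> label_in_range dA a \<and> label_in_range dB b \<and> label_in_range dC c"
  by (erule labels_cases) auto

lemma labels_distinct_orth:
  assumes "D \<in> labels dA dB dC" "D' \<in> labels dA dB dC" "D \<noteq> D'"
  shows "label_orth (fst D) (fst D') \<or> label_orth (fst D') (fst D) \<or>
    label_orth (fst (snd D)) (fst (snd D')) \<or> label_orth (fst (snd D')) (fst (snd D)) \<or>
    label_orth (snd (snd D)) (snd (snd D')) \<or> label_orth (snd (snd D')) (snd (snd D))"
  using assms(3)
  by (cases rule: labels_cases[OF assms(1)]; cases rule: labels_cases[OF assms(2)]) auto

lemma cinner_label_vec_self_neq_0: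
  "3 \<le> d \<Longrightarrow> label_in_range d a \<Longrightarrow> cinner d (label_vec d a) (label_vec d a) \<noteq> 0"
  by (cases a) (auto simp: cinner_ket ket_apply cinner_xi_xi cinner_eta_eta cinner_beta_beta
      cinner_allones allones_apply simp del: of_nat_diff)

context
  fixes dA dB dC :: nat
  assumes dims: "3 \<le> dA" "3 \<le> dB" "3 \<le> dC"
begin

lemma label_state_orthogonal:
  assumes "D \<in> labels dA dB dC" "D' \<in> labels dA dB dC" "D \<noteq> D'"
  shows "tinner dA dB dC (label_state dA dB dC D) (label_state dA dB dC D') = 0"
proof -
  obtain a b c a' b' c' where D: "D = (a, b, c)" "D' = (a', b', c')" by (cases D, cases D')
  have "cinner d (label_vec d u) (label_vec d v) = 0"
    if "3 \<le> d" "label_in_range d u" "label_in_range d v" "label_orth u v \<or> label_orth v u" for d u v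
    using that cinner_label_orth[of d u v] cinner_label_orth[of d v u] cinner_commute[of d "label_vec d u"]
    by auto
  then show ?thesis
    using labels_distinct_orth[OF assms] labels_in_range assms(1,2) dims
    unfolding D label_state_def by (auto simp: tinner_prod3)
qed

lemma tinner_label_state_self_neq_0:
  assumes "D \<in> labels dA dB dC"
  shows "tinner dA dB dC (label_state dA dB dC D) (label_state dA dB dC D) \<noteq> 0"
  using assms labels_in_range[of _ _ _ dA dB dC] cinner_label_vec_self_neq_0 dims
  by (cases D) (auto simp: label_state_def tinner_prod3)

lemma label_state_product_state:
  assumes "D \<in> labels dA dB dC"
  shows "product_state dA dB dC (label_state dA dB dC D)"
proof -
  obtain a b c where D: "D = (a, b, c)" by (cases D)
  have "label_state dA dB dC D \<noteq> (\<lambda>a b c. 0)"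
    using tinner_label_state_self_neq_0[OF assms] by (auto simp: tinner_def)
  moreover have "label_vec dA a \<in> cvec dA" "label_vec dB b \<in> cvec dB" "label_vec dC c \<in> cvec dC"
    using label_vec_cvec dims by auto
  ultimately show ?thesis unfolding product_state_def label_state_def D by auto
qed

lemma inj_on_label_state: "inj_on (label_state dA dB dC) (labels dA dB dC)"
  by (rule inj_onI) (metis label_state_orthogonal tinner_label_state_self_neq_0)

end

lemma finite_index_pairs [simp]: "finite (index_pairs n m)"
  by (simp add: index_pairs_def)

lemma finite_index_triples [simp]: "finite (index_triples n m l)"
  by (simp add: index_triples_def)

lemma card_index_pairs: "1 \<le> n \<Longrightarrow> 1 \<le> m \<Longrightarrow> card (index_pairs n m) = n * m - 1"
  by (simp add: index_pairs_def card_cartesian_product)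

lemma card_index_triples:
  "1 \<le> n \<Longrightarrow> 1 \<le> m \<Longrightarrow> 1 \<le> l \<Longrightarrow> card (index_triples n m l) = n * m * l - 1"
  by (simp add: index_triples_def card_cartesian_product)

lemma card_image_index_pairs:
  assumes "\<forall>i k i' k'. g i k = g i' k' \<longrightarrow> i = i' \<and> k = k'" "1 \<le> n" "1 \<le> m"
  shows "card ((\<lambda>(i, k). g i k) ` index_pairs n m) = n * m - 1"
  using assms by (subst card_image) (auto simp: inj_on_def card_index_pairs)

lemma card_image_index_triples:
  assumes "\<forall>i j k i' j' k'. g i j k = g i' j' k' \<longrightarrow> i = i' \<and> j = j' \<and> k = k'"
    "1 \<le> n" "1 \<le> m" "1 \<le> l"
  shows "card ((\<lambda>(i, j, k). g i j k) ` index_triples n m l) = n * m * l - 1"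
  using assms by (subst card_image) (auto simp: inj_on_def card_index_triples)

lemma card_labels:
  assumes "3 \<le> dA" "3 \<le> dB" "3 \<le> dC"
  shows "card (labels dA dB dC) = dA * dB * dC - 8"
proof -
  have "card (labels dA dB dC) =
      2 * ((dA - 1) * (dC - 1) - 1) + 2 * ((dA - 1) * (dB - 1) - 1) + 2 * ((dB - 1) * (dC - 1) - 1)
      + ((dA - 2) * (dB - 2) * (dC - 2) - 1) + 1"
    unfolding labels_def using assms
    by (subst card_Un_disjoint, simp, simp, fastforce)+
      (simp add: card_image_index_pairs card_image_index_triples)
  also have "\<dots> = dA * dB * dC - 8"
  proof -
    obtain p q r where "dA = p + 3" "dB = q + 3" "dC = r + 3"
      using assms by (metis add.commute le_Suc_ex)
    then show ?thesis by (simp add: algebra_simps)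
  qed
  finally show ?thesis .
qed

section \<open>Blocks of a local vector\<close>

lemma const_on_insert: "i \<in> I \<Longrightarrow> const_on (insert j I) x \<longleftrightarrow> const_on I x \<and> x j = x i"
  unfolding const_on_def by auto

lemma zero_on_iff_const_on: "i \<in> I \<Longrightarrow> (\<forall>t\<in>I. x t = 0) \<longleftrightarrow> const_on I x \<and> x i = 0"
  unfolding const_on_def by auto

lemma zero_on_lessThan_shift: "(\<forall>t\<in>{..<n}. x (Suc t) = 0) \<longleftrightarrow> (\<forall>t\<in>{1..<Suc n}. x t = 0)"
  unfolding atLeastLessThanSuc_atLeastAtMost image_Suc_lessThan[symmetric] by auto

lemma const_on_lessThan_shift: "const_on {..<n} (\<lambda>t. x (Suc t)) \<longleftrightarrow> const_on {1..<Suc n} x"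
  unfolding const_on_def atLeastLessThanSuc_atLeastAtMost image_Suc_lessThan[symmetric] by auto

context
  fixes d :: nat
  assumes d: "3 \<le> d"
begin

lemma upper_block: "{1..<d} = insert (d - 1) {1..<d - 1}"
  using d by auto

lemma lower_block: "{..<d - 1} = insert 0 {1..<d - 1}"
  using d by auto

lemma one_in_middle_block: "1 \<in> {1..<d - 1}"
  using d by simp

lemma const_on_upper_block: "const_on {1..<d} x \<longleftrightarrow> const_on {1..<d - 1} x \<and> x (d - 1) = x 1"
  unfolding upper_block by (rule const_on_insert[OF one_in_middle_block])

lemma const_on_lower_block: "const_on {..<d - 1} x \<longleftrightarrow> const_on {1..<d - 1} x \<and> x 0 = x 1"
  unfolding lower_block by (rule const_on_insert[OF one_in_middle_block])

lemma zero_on_upper_block: "(\<forall>t\<in>{1..<d}. x t = 0) \<longleftrightarrow> (\<forall>t\<in>{1..<d - 1}. x t = 0) \<and> x (d - 1) = 0"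
  unfolding upper_block by auto

lemma zero_on_lower_block: "(\<forall>t\<in>{..<d - 1}. x t = 0) \<longleftrightarrow> x 0 = 0 \<and> (\<forall>t\<in>{1..<d - 1}. x t = 0)"
  unfolding lower_block by auto

lemma zero_on_middle_block: "(\<forall>t\<in>{1..<d - 1}. x t = 0) \<longleftrightarrow> const_on {1..<d - 1} x \<and> x 1 = 0"
  by (rule zero_on_iff_const_on[OF one_in_middle_block])

lemma sum_middle_const:
  assumes "const_on {1..<d - 1} x"
  shows "(\<Sum>t<d. x t) = x 0 + of_nat (d - 2) * x 1 + x (d - 1)"
proof -
  have "{..<d} = insert 0 (insert (d - 1) {1..<d - 1})" using d by auto
  then have "(\<Sum>t<d. x t) = x 0 + x (d - 1) + (\<Sum>t\<in>{1..<d - 1}. x t)" using d by simp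
  also have "(\<Sum>t\<in>{1..<d - 1}. x t) = of_nat (d - 2) * x 1"
  proof -
    obtain c where c: "\<forall>t\<in>{1..<d - 1}. x t = c" using assms unfolding const_on_def by blast
    then have "x 1 = c" using one_in_middle_block by blast
    then show ?thesis using c by (simp add: numeral_2_eq_2)
  qed
  finally show ?thesis by simp
qed

lemma nonzero_blocks:
  assumes "\<exists>t<d. x t \<noteq> 0"
  shows "x 0 \<noteq> 0 \<or> x (d - 1) \<noteq> 0 \<or> \<not> (\<forall>t\<in>{1..<d - 1}. x t = 0)"
proof -
  obtain t where "t < d" "x t \<noteq> 0" using assms by blast
  moreover have "t = 0 \<or> t = d - 1 \<or> t \<in> {1..<d - 1}" using \<open>t < d\<close> by auto
  ultimately show ?thesis by auto
qed

lemma profile_neq_0: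
  assumes "const_on {1..<d - 1} x" "\<exists>t<d. x t \<noteq> 0"
  shows "(x 0, x 1, x (d - 1)) \<noteq> (0, 0, 0)"
  using nonzero_blocks[OF assms(2)] zero_on_middle_block assms(1) by auto

end

section \<open>Constraints on an orthogonal product state\<close>

(* What orthogonality of p (x) q to all xi_i (x) eta_k with (i, k) <> (0, 0) amounts to
  (upper_lower_flat_of_orthogonal). *)
definition upper_lower_flat :: "nat \<Rightarrow> (nat \<Rightarrow> complex) \<Rightarrow> nat \<Rightarrow> (nat \<Rightarrow> complex) \<Rightarrow> bool" where
  "upper_lower_flat dP p dQ q \<longleftrightarrow>
     (\<forall>t\<in>{1..<dP}. p t = 0) \<or> (\<forall>t\<in>{..<dQ - 1}. q t = 0) \<or> (const_on {1..<dP} p \<and> const_on {..<dQ - 1} q)"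

lemma upper_lower_flat_of_orthogonal:
  assumes "2 \<le> dP" "2 \<le> dQ"
    and "\<forall>i<dP - 1. \<forall>k<dQ - 1. (i, k) \<noteq> (0, 0) \<longrightarrow>
      cinner dP (xi dP i) p * cinner dQ (eta dQ k) q * r = 0"
  shows "r = 0 \<or> upper_lower_flat dP p dQ q"
proof (cases "r = 0")
  case False
  then have "\<forall>i<dP - 1. \<forall>k<dQ - 1. (i, k) \<noteq> (0, 0) \<longrightarrow> dft (dP - 1) (\<lambda>t. p (Suc t)) i * dft (dQ - 1) q k = 0"
    using assms by (simp add: cinner_xi cinner_eta)
  from dft_products_vanishing_off_0[OF _ _ this] assms(1,2) have "upper_lower_flat dP p dQ q"
    unfolding upper_lower_flat_def zero_on_lessThan_shift const_on_lessThan_shift by simp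
  then show ?thesis ..
qed simp

definition middle_flat ::
    "nat \<Rightarrow> (nat \<Rightarrow> complex) \<Rightarrow> nat \<Rightarrow> (nat \<Rightarrow> complex) \<Rightarrow> nat \<Rightarrow> (nat \<Rightarrow> complex) \<Rightarrow> bool" where
  "middle_flat dA x dB y dC z \<longleftrightarrow>
     (\<forall>t\<in>{1..<dA - 1}. x t = 0) \<or> (\<forall>t\<in>{1..<dB - 1}. y t = 0) \<or> (\<forall>t\<in>{1..<dC - 1}. z t = 0) \<or>
     (const_on {1..<dA - 1} x \<and> const_on {1..<dB - 1} y \<and> const_on {1..<dC - 1} z)"

lemma middle_flat_of_orthogonal:
  assumes "3 \<le> dA" "3 \<le> dB" "3 \<le> dC"
    and "\<forall>i<dA - 2. \<forall>j<dB - 2. \<forall>k<dC - 2. (i, j, k) \<noteq> (0, 0, 0) \<longrightarrow>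
      cinner dA (beta dA i) x * cinner dB (beta dB j) y * cinner dC (beta dC k) z = 0"
  shows "middle_flat dA x dB y dC z"
proof -
  have "\<forall>i<dA - 2. \<forall>j<dB - 2. \<forall>k<dC - 2. (i, j, k) \<noteq> (0, 0, 0) \<longrightarrow>
      dft (dA - 2) (\<lambda>t. x (Suc t)) i * dft (dB - 2) (\<lambda>t. y (Suc t)) j * dft (dC - 2) (\<lambda>t. z (Suc t)) k = 0"
    using assms by (simp add: cinner_beta)
  from dft_products_vanishing_off_0_3[OF _ _ _ this] assms(1-3) show ?thesis
    unfolding middle_flat_def zero_on_lessThan_shift const_on_lessThan_shift
    by (simp add: Suc_diff_Suc numeral_2_eq_2)
qed

(* Used for (x 0, x 1, x (d - 1)) with x constant on the middle block {1..<d - 1}; it then says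
  that x is a multiple of the indicator of a nonempty contiguous union of the blocks {0},
  {1..<d - 1} and {d - 1}. *)
definition block_profile :: "complex \<Rightarrow> complex \<Rightarrow> complex \<Rightarrow> bool" where
  "block_profile u v w \<longleftrightarrow>
     (\<exists>s. (u, v, w) \<in> {(s, 0, 0), (0, s, 0), (0, 0, s), (s, s, 0), (0, s, s), (s, s, s)})"

lemma block_profile_sum_neq_0:
  assumes "block_profile u v w" "(u, v, w) \<noteq> (0, 0, 0)" "1 \<le> n"
  shows "u + of_nat n * v + w \<noteq> 0"
proof -
  obtain s where s: "(u, v, w) \<in> {(s, 0, 0), (0, s, 0), (0, 0, s), (s, s, 0), (0, s, s), (s, s, s)}"
    using assms(1) unfolding block_profile_def by blast
  then have "s \<noteq> 0" using assms(2) by auto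
  moreover have "u + of_nat n * v + w \<in> {s, of_nat n * s, of_nat (n + 1) * s, of_nat (n + 2) * s}"
    using s by (auto simp: algebra_simps)
  moreover have "of_nat (Suc n) \<noteq> (0::complex)" "of_nat (Suc (Suc n)) \<noteq> (0::complex)"
    by (simp_all only: of_nat_eq_0_iff)
  ultimately show ?thesis using assms(3) by auto
qed

lemma upper_lower_flat_middle_const:
  assumes "3 \<le> dP" "3 \<le> dQ" "const_on {1..<dP - 1} p" "const_on {1..<dQ - 1} q"
  shows "upper_lower_flat dP p dQ q \<longleftrightarrow>
    (p 1 = 0 \<and> p (dP - 1) = 0) \<or> (q 0 = 0 \<and> q 1 = 0) \<or> (p (dP - 1) = p 1 \<and> q 0 = q 1)"
  using assms(3,4)
  unfolding upper_lower_flat_def zero_on_upper_block[OF assms(1)] zero_on_lower_block[OF assms(2)]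
    const_on_upper_block[OF assms(1)] const_on_lower_block[OF assms(2)]
    zero_on_middle_block[OF assms(1)] zero_on_middle_block[OF assms(2)]
  by auto

lemma block_profile_of_flat_constraints:
  fixes x0 x1 xl y0 y1 yl z0 z1 zl :: complex
  assumes "y0 = 0 \<or> (x1 = 0 \<and> xl = 0) \<or> (z0 = 0 \<and> z1 = 0) \<or> (xl = x1 \<and> z0 = z1)"
    and "zl = 0 \<or> (x1 = 0 \<and> xl = 0) \<or> (y0 = 0 \<and> y1 = 0) \<or> (xl = x1 \<and> y0 = y1)"
    and "xl = 0 \<or> (y1 = 0 \<and> yl = 0) \<or> (z0 = 0 \<and> z1 = 0) \<or> (yl = y1 \<and> z0 = z1)"
    and "yl = 0 \<or> (z1 = 0 \<and> zl = 0) \<or> (x0 = 0 \<and> x1 = 0) \<or> (zl = z1 \<and> x0 = x1)"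
    and "z0 = 0 \<or> (y1 = 0 \<and> yl = 0) \<or> (x0 = 0 \<and> x1 = 0) \<or> (yl = y1 \<and> x0 = x1)"
    and "x0 = 0 \<or> (z1 = 0 \<and> zl = 0) \<or> (y0 = 0 \<and> y1 = 0) \<or> (zl = z1 \<and> y0 = y1)"
    and "(x0, x1, xl) \<noteq> (0, 0, 0)" "(y0, y1, yl) \<noteq> (0, 0, 0)" "(z0, z1, zl) \<noteq> (0, 0, 0)"
  shows "block_profile x0 x1 xl"
proof -
  have "(x1 = 0 \<and> xl = 0) \<or> (x0 = 0 \<and> xl = 0) \<or> (x0 = 0 \<and> x1 = 0) \<or>
      (x1 = x0 \<and> xl = 0) \<or> (x1 = xl \<and> x0 = 0) \<or> (x1 = x0 \<and> x1 = xl)"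
    using assms by auto
  then show ?thesis unfolding block_profile_def by (elim disjE conjE; hypsubst; blast)
qed

(* The constraints that orthogonality to the families A1, ..., B3 and F imposes on a product
  state x (x) y (x) z with nonzero factors.  They are invariant under the cyclic shift of the
  parties (rotate), so facts about the first factor transfer to the other two. *)
locale orthogonality_constraints =
  fixes a b c :: nat and x y z :: "nat \<Rightarrow> complex"
  assumes dims: "3 \<le> a" "3 \<le> b" "3 \<le> c"
    and nonzero: "\<exists>t<a. x t \<noteq> 0" "\<exists>t<b. y t \<noteq> 0" "\<exists>t<c. z t \<noteq> 0"
    and A1: "y 0 = 0 \<or> upper_lower_flat a x c z"
    and A2: "z (c - 1) = 0 \<or> upper_lower_flat a x b y"
    and A3: "x (a - 1) = 0 \<or> upper_lower_flat b y c z"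
    and B1: "y (b - 1) = 0 \<or> upper_lower_flat c z a x"
    and B2: "z 0 = 0 \<or> upper_lower_flat b y a x"
    and B3: "x 0 = 0 \<or> upper_lower_flat c z b y"
    and F: "middle_flat a x b y c z"
begin

lemma rotate: "orthogonality_constraints b c a y z x"
proof -
  have "middle_flat b y c z a x" using F unfolding middle_flat_def by blast
  then show ?thesis by unfold_locales (use dims nonzero A1 A2 A3 B1 B2 B3 in blast)+
qed

lemma middle_const_first: "const_on {1..<a - 1} x"
proof (rule ccontr)
  assume x: "\<not> const_on {1..<a - 1} x"
  have x_upper: "\<not> (\<forall>t\<in>{1..<a}. x t = 0)" "\<not> const_on {1..<a} x"
    and x_lower: "\<not> (\<forall>t\<in>{..<a - 1}. x t = 0)" "\<not> const_on {..<a - 1} x"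
    using x
    unfolding zero_on_upper_block[OF dims(1)] zero_on_lower_block[OF dims(1)]
      const_on_upper_block[OF dims(1)] const_on_lower_block[OF dims(1)] zero_on_middle_block[OF dims(1)]
    by auto
  have "y 0 = 0 \<or> (\<forall>t\<in>{..<c - 1}. z t = 0)" using A1 x_upper unfolding upper_lower_flat_def by blast
  moreover have "z (c - 1) = 0 \<or> (\<forall>t\<in>{..<b - 1}. y t = 0)" using A2 x_upper unfolding upper_lower_flat_def by blast
  moreover have "y (b - 1) = 0 \<or> (\<forall>t\<in>{1..<c}. z t = 0)" using B1 x_lower unfolding upper_lower_flat_def by blast
  moreover have "z 0 = 0 \<or> (\<forall>t\<in>{1..<b}. y t = 0)" using B2 x_lower unfolding upper_lower_flat_def by blast
  moreover have "(\<forall>t\<in>{1..<b - 1}. y t = 0) \<or> (\<forall>t\<in>{1..<c - 1}. z t = 0)"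
    using F x zero_on_middle_block[OF dims(1)] unfolding middle_flat_def by blast
  ultimately show False
    using nonzero_blocks[OF dims(2) nonzero(2)] nonzero_blocks[OF dims(3) nonzero(3)]
    unfolding zero_on_upper_block[OF dims(2)] zero_on_upper_block[OF dims(3)]
      zero_on_lower_block[OF dims(2)] zero_on_lower_block[OF dims(3)]
    by auto
qed

lemma middle_const: "const_on {1..<a - 1} x" "const_on {1..<b - 1} y" "const_on {1..<c - 1} z"
  using middle_const_first orthogonality_constraints.middle_const_first[OF rotate]
    orthogonality_constraints.middle_const_first[OF orthogonality_constraints.rotate[OF rotate]]
  by blast+

lemma block_profile_first: "block_profile (x 0) (x 1) (x (a - 1))"
  using A1 A2 A3 B1 B2 B3
  unfolding upper_lower_flat_middle_const[OF dims(1) dims(3) middle_const(1) middle_const(3)]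
    upper_lower_flat_middle_const[OF dims(1) dims(2) middle_const(1) middle_const(2)]
    upper_lower_flat_middle_const[OF dims(2) dims(3) middle_const(2) middle_const(3)]
    upper_lower_flat_middle_const[OF dims(3) dims(1) middle_const(3) middle_const(1)]
    upper_lower_flat_middle_const[OF dims(2) dims(1) middle_const(2) middle_const(1)]
    upper_lower_flat_middle_const[OF dims(3) dims(2) middle_const(3) middle_const(2)]
  by (rule block_profile_of_flat_constraints)
    (rule profile_neq_0; fact dims middle_const nonzero)+

lemma sum_first_neq_0: "(\<Sum>t<a. x t) \<noteq> 0"
proof -
  have "(x 0, x 1, x (a - 1)) \<noteq> (0, 0, 0)"
    by (rule profile_neq_0[OF dims(1) middle_const(1) nonzero(1)])
  moreover have "1 \<le> a - 2" using dims(1) by simp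
  ultimately have "x 0 + of_nat (a - 2) * x 1 + x (a - 1) \<noteq> 0"
    by (rule block_profile_sum_neq_0[OF block_profile_first])
  then show ?thesis unfolding sum_middle_const[OF dims(1) middle_const(1)] .
qed

lemma sums_neq_0:
  "(\<Sum>t<a. x t) \<noteq> 0" "(\<Sum>t<b. y t) \<noteq> 0" "(\<Sum>t<c. z t) \<noteq> 0"
  using sum_first_neq_0 orthogonality_constraints.sum_first_neq_0[OF rotate]
    orthogonality_constraints.sum_first_neq_0[OF orthogonality_constraints.rotate[OF rotate]]
  by blast+

end

section \<open>Non-spanning, unextendibility and size\<close>

lemma UPB_set_members:
  shows "\<lbrakk>i < dA - 1; k < dC - 1; (i, k) \<noteq> (0, 0)\<rbrakk> \<Longrightarrow>
      prod3 (xi dA i) (ket 0) (eta dC k) \<in> UPB_set dA dB dC"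
    and "\<lbrakk>i < dA - 1; j < dB - 1; (i, j) \<noteq> (0, 0)\<rbrakk> \<Longrightarrow>
      prod3 (xi dA i) (eta dB j) (ket (dC - 1)) \<in> UPB_set dA dB dC"
    and "\<lbrakk>j < dB - 1; k < dC - 1; (j, k) \<noteq> (0, 0)\<rbrakk> \<Longrightarrow>
      prod3 (ket (dA - 1)) (xi dB j) (eta dC k) \<in> UPB_set dA dB dC"
    and "\<lbrakk>i < dA - 1; k < dC - 1; (i, k) \<noteq> (0, 0)\<rbrakk> \<Longrightarrow>
      prod3 (eta dA i) (ket (dB - 1)) (xi dC k) \<in> UPB_set dA dB dC"
    and "\<lbrakk>i < dA - 1; j < dB - 1; (i, j) \<noteq> (0, 0)\<rbrakk> \<Longrightarrow>
      prod3 (eta dA i) (xi dB j) (ket 0) \<in> UPB_set dA dB dC"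
    and "\<lbrakk>j < dB - 1; k < dC - 1; (j, k) \<noteq> (0, 0)\<rbrakk> \<Longrightarrow>
      prod3 (ket 0) (eta dB j) (xi dC k) \<in> UPB_set dA dB dC"
    and "\<lbrakk>i < dA - 2; j < dB - 2; k < dC - 2; (i, j, k) \<noteq> (0, 0, 0)\<rbrakk> \<Longrightarrow>
      prod3 (beta dA i) (beta dB j) (beta dC k) \<in> UPB_set dA dB dC"
    and "prod3 (allones dA) (allones dB) (allones dC) \<in> UPB_set dA dB dC"
  unfolding UPB_set_def by blast+

lemma orthogonal_product_constraints:
  assumes dims: "3 \<le> dA" "3 \<le> dB" "3 \<le> dC"
    and nonzero: "\<exists>t<dA. x t \<noteq> 0" "\<exists>t<dB. y t \<noteq> 0" "\<exists>t<dC. z t \<noteq> 0"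
    and orth: "\<forall>u\<in>UPB_set dA dB dC. tinner dA dB dC u (prod3 x y z) = 0"
  shows "orthogonality_constraints dA dB dC x y z"
proof -
  have orth_prod: "cinner dA u1 x * cinner dB u2 y * cinner dC u3 z = 0"
    if "prod3 u1 u2 u3 \<in> UPB_set dA dB dC" for u1 u2 u3
    using orth that tinner_prod3[of dA dB dC u1 u2 u3 x y z] by simp
  note members = UPB_set_members
  have dims2: "2 \<le> dA" "2 \<le> dB" "2 \<le> dC" using dims by simp_all
  have A1: "y 0 = 0 \<or> upper_lower_flat dA x dC z"
    using orth_prod[OF members(1)] dims2
    by (intro upper_lower_flat_of_orthogonal) (simp_all add: cinner_ket mult_ac)
  have A2: "z (dC - 1) = 0 \<or> upper_lower_flat dA x dB y"
    using orth_prod[OF members(2)] dims2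
    by (intro upper_lower_flat_of_orthogonal) (simp_all add: cinner_ket mult_ac)
  have A3: "x (dA - 1) = 0 \<or> upper_lower_flat dB y dC z"
    using orth_prod[OF members(3)] dims2
    by (intro upper_lower_flat_of_orthogonal) (simp_all add: cinner_ket mult_ac)
  have B1: "y (dB - 1) = 0 \<or> upper_lower_flat dC z dA x"
    using orth_prod[OF members(4)] dims2
    by (intro upper_lower_flat_of_orthogonal) (simp_all add: cinner_ket mult_ac)
  have B2: "z 0 = 0 \<or> upper_lower_flat dB y dA x"
    using orth_prod[OF members(5)] dims2
    by (intro upper_lower_flat_of_orthogonal) (simp_all add: cinner_ket mult_ac)
  have B3: "x 0 = 0 \<or> upper_lower_flat dC z dB y"
    using orth_prod[OF members(6)] dims2
    by (intro upper_lower_flat_of_orthogonal) (simp_all add: cinner_ket mult_ac)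
  have F: "middle_flat dA x dB y dC z"
    using orth_prod[OF members(7)] by (intro middle_flat_of_orthogonal dims) blast
  show ?thesis
    by unfold_locales (rule dims nonzero A1 A2 A3 B1 B2 B3 F)+
qed

lemma UPB_set_corners:
  assumes "3 \<le> dA" "3 \<le> dB" "3 \<le> dC" "u \<in> UPB_set dA dB dC"
  shows "u 0 0 0 = u (dA - 1) (dB - 1) (dC - 1)"
  using assms unfolding UPB_set_def
  by (auto simp: prod3_def ket_apply xi_apply eta_apply beta_apply allones_apply)

lemma UPB_set_not_spanning:
  assumes "3 \<le> dA" "3 \<le> dB" "3 \<le> dC"
  shows "\<not> tspace dA dB dC \<subseteq> tspan (UPB_set dA dB dC)"
proof
  assume span: "tspace dA dB dC \<subseteq> tspan (UPB_set dA dB dC)"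
  have "prod3 (ket 0) (ket 0) (ket 0) \<in> tspace dA dB dC"
    using assms by (auto simp: tspace_def prod3_def ket_apply)
  then obtain f where f: "prod3 (ket 0) (ket 0) (ket 0) = (\<lambda>a b c. \<Sum>u\<in>UPB_set dA dB dC. f u * u a b c)"
    using span unfolding tspan_def by blast
  have "(\<Sum>u\<in>UPB_set dA dB dC. f u * u 0 0 0) = (\<Sum>u\<in>UPB_set dA dB dC. f u * u (dA - 1) (dB - 1) (dC - 1))"
    using UPB_set_corners[OF assms] by (intro sum.cong) auto
  then have "prod3 (ket 0) (ket 0) (ket 0) 0 0 0 = prod3 (ket 0) (ket 0) (ket 0) (dA - 1) (dB - 1) (dC - 1)"
    unfolding f by simp
  then show False using assms by (simp add: prod3_def ket_apply)
qed

lemma UPB_set_unextendible: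
  assumes dims: "3 \<le> dA" "3 \<le> dB" "3 \<le> dC" and "product_state dA dB dC v"
  shows "\<not> (\<forall>u\<in>UPB_set dA dB dC. tinner dA dB dC u v = 0)"
proof
  assume orth: "\<forall>u\<in>UPB_set dA dB dC. tinner dA dB dC u v = 0"
  obtain x y z where xyz: "x \<in> cvec dA" "y \<in> cvec dB" "z \<in> cvec dC" and v: "v = prod3 x y z"
    and v_nonzero: "v \<noteq> (\<lambda>a b c. 0)"
    using assms(4) unfolding product_state_def by blast
  have "\<exists>a b c. x a * y b * z c \<noteq> 0"
  proof (rule ccontr)
    assume "\<not> ?thesis"
    then have "v = (\<lambda>a b c. 0)" unfolding v prod3_def by auto
    then show False using v_nonzero by contradiction
  qed
  then obtain a b c where abc: "x a \<noteq> 0" "y b \<noteq> 0" "z c \<noteq> 0" by auto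
  moreover have "a < dA" "b < dB" "c < dC"
    using abc xyz unfolding cvec_def mem_Collect_eq by (meson leI)+
  ultimately have "\<exists>t<dA. x t \<noteq> 0" "\<exists>t<dB. y t \<noteq> 0" "\<exists>t<dC. z t \<noteq> 0"
    by blast+
  then have "orthogonality_constraints dA dB dC x y z"
    using orthogonal_product_constraints dims orth unfolding v by blast
  moreover have "tinner dA dB dC (prod3 (allones dA) (allones dB) (allones dC)) v = 0"
    using orth UPB_set_members(8) by blast
  then have "(\<Sum>t<dA. x t) * (\<Sum>t<dB. y t) * (\<Sum>t<dC. z t) = 0"
    unfolding v tinner_prod3 cinner_allones .
  ultimately show False using orthogonality_constraints.sums_neq_0 by fastforce
qed

theorem proposition1:
  fixes dA dB dC :: nat
  assumes "3 \<le> dA" and "dA \<le> dB" and "dB \<le> dC"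
  shows "is_UPB dA dB dC (UPB_set dA dB dC) \<and> card (UPB_set dA dB dC) = dA * dB * dC - 8"
proof -
  have dims: "3 \<le> dA" "3 \<le> dB" "3 \<le> dC" using assms by linarith+
  note UPB_eq = UPB_set_eq_image_labels[of dA dB dC]
  have "finite (UPB_set dA dB dC)"
    unfolding UPB_eq labels_def by simp
  moreover have "\<forall>u\<in>UPB_set dA dB dC. product_state dA dB dC u"
    unfolding UPB_eq using label_state_product_state[OF dims] by blast
  moreover have "\<forall>u\<in>UPB_set dA dB dC. \<forall>v\<in>UPB_set dA dB dC. u \<noteq> v \<longrightarrow> tinner dA dB dC u v = 0"
    unfolding UPB_eq using label_state_orthogonal[OF dims] by blast
  moreover have "card (UPB_set dA dB dC) = dA * dB * dC - 8"
    unfolding UPB_eq card_image[OF inj_on_label_state[OF dims]] by (rule card_labels[OF dims])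
  ultimately show ?thesis
    using UPB_set_not_spanning[OF dims] UPB_set_unextendible[OF dims] unfolding is_UPB_def by blast
qed

end
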